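(* Let $T$ be a finite rooted tree with root $v_0$ and leaves identified with classes $1,\dots,K$; identify each non-root node $v_j$ with the set of classes in its subtree, let $p(j)$ be the parent of $v_j$, $d(j)$ its depth, and $a(y)$ the set of non-root nodes on the path from leaf $y$ to the root (including the leaf). Fix $\alpha>0$ and define, for a probability vector $f=(f_1,\dots,f_K)$ with positive entries and label $y$, the hierarchical cross-entropy $$\mathcal L_{\mathrm{HXE}}(f,y)=-\sum_{j\in a(y)} e^{-\alpha d(j)}\log\Big(\frac{\sum_{k\in v_j} f_k}{\sum_{k\in v_{p(j)}} f_k}\Big).$$ Then $\mathcal L_{\mathrm{HXE}}$ can be written in the form $-\sum_{j\in a(y)} w_j\log\big(\sum_{k\in v_j} f_k\big)$ with weights $w_j>0$ on non-root nodes forming a balanced weighted tree (i.e. $\sum_{j\in a(k)} w_j$ is the same for all classes $k$), and consequently $\mathcal L_{\mathrm{HXE}}$ is a proper scoring rule.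
   Context: Proper scoring rule: a loss $\mathcal L(f,y)$ on probability vectors over $K$ classes is proper if, for every label distribution $\pi$, $\sum_k\pi_k\mathcal L(f,k)$ is minimized over the simplex at $f=\pi$. *)

theory Defs
  imports Complex_Main
begin

text \<open>Classes are 0..<K; leaf k is the leaf node of class k.\<close>

definition rooted_tree :: "'v set \<Rightarrow> 'v \<Rightarrow> ('v \<Rightarrow> 'v) \<Rightarrow> bool" where
  "rooted_tree V r par \<longleftrightarrow> finite V \<and> r \<in> V \<and> par r = r \<and>
     (\<forall>v\<in>V. par v \<in> V) \<and> (\<forall>v\<in>V. \<exists>n. (par ^^ n) v = r)"

definition depth :: "'v \<Rightarrow> ('v \<Rightarrow> 'v) \<Rightarrow> 'v \<Rightarrow> nat" where
  "depth r par v = (LEAST n. (par ^^ n) v = r)"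

definition children :: "'v set \<Rightarrow> 'v \<Rightarrow> ('v \<Rightarrow> 'v) \<Rightarrow> 'v \<Rightarrow> 'v set" where
  "children V r par v = {u \<in> V - {r}. par u = v}"

definition tree_leaves :: "'v set \<Rightarrow> 'v \<Rightarrow> ('v \<Rightarrow> 'v) \<Rightarrow> 'v set" where
  "tree_leaves V r par = {v \<in> V. children V r par v = {}}"

definition node_classes :: "nat \<Rightarrow> ('v \<Rightarrow> 'v) \<Rightarrow> (nat \<Rightarrow> 'v) \<Rightarrow> 'v \<Rightarrow> nat set" where
  "node_classes K par leaf v = {k \<in> {0..<K}. \<exists>n. (par ^^ n) (leaf k) = v}"

definition anc_path :: "'v \<Rightarrow> ('v \<Rightarrow> 'v) \<Rightarrow> (nat \<Rightarrow> 'v) \<Rightarrow> nat \<Rightarrow> 'v set" where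
  "anc_path r par leaf y = {(par ^^ n) (leaf y) | n. n < depth r par (leaf y)}"

definition prob_vec_pos :: "nat \<Rightarrow> (nat \<Rightarrow> real) \<Rightarrow> bool" where
  "prob_vec_pos K f \<longleftrightarrow> (\<forall>k<K. f k > 0) \<and> (\<Sum>k<K. f k) = 1"

definition L_HXE :: "real \<Rightarrow> nat \<Rightarrow> 'v \<Rightarrow> ('v \<Rightarrow> 'v) \<Rightarrow> (nat \<Rightarrow> 'v) \<Rightarrow> (nat \<Rightarrow> real) \<Rightarrow> nat \<Rightarrow> real" where
  "L_HXE \<alpha> K r par leaf f y =
     - (\<Sum>j\<in>anc_path r par leaf y. exp (- \<alpha> * real (depth r par j)) *
          ln ((\<Sum>k\<in>node_classes K par leaf j. f k) / (\<Sum>k\<in>node_classes K par leaf (par j). f k)))"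

text \<open>Proper scoring rule (on the open simplex of probability vectors with positive entries,
  the domain on which the loss is defined).\<close>
definition proper :: "nat \<Rightarrow> ((nat \<Rightarrow> real) \<Rightarrow> nat \<Rightarrow> real) \<Rightarrow> bool" where
  "proper K L \<longleftrightarrow> (\<forall>\<pi> f. prob_vec_pos K \<pi> \<longrightarrow> prob_vec_pos K f \<longrightarrow>
      (\<Sum>k<K. \<pi> k * L \<pi> k) \<le> (\<Sum>k<K. \<pi> k * L f k))"

end

theory Submission
  imports Defs
begin

(* Write S_f(v) for the f-mass of the classes below v and q_f(v) = S_f(v) / S_f(par v).
   Splitting the logarithms of the ratios, log S_f(j) for a node j on the path of y gets
   the coefficient exp(-alpha d(j)) from j itself and -exp(-alpha (d(j) + 1)) from its child
   on the path, unless j is the leaf; these coefficients are the weights, positive for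
   alpha > 0, and along every path they telescope to exp(-alpha).
   For properness, grouping the expected loss by parent nodes u turns it into a
   nonnegative combination of the cross entropies between the distributions q_pi and q_f
   on the children of u, each of which is minimised at f = pi by Gibbs' inequality. *)

lemma gibbs_inequality:
  fixes p q :: "'a \<Rightarrow> real"
  assumes p: "\<And>i. i \<in> I \<Longrightarrow> 0 < p i" and q: "\<And>i. i \<in> I \<Longrightarrow> 0 < q i"
    and sum_le: "sum q I \<le> sum p I"
  shows "(\<Sum>i\<in>I. p i * ln (q i)) \<le> (\<Sum>i\<in>I. p i * ln (p i))"
proof -
  have "p i * ln (q i) - p i * ln (p i) \<le> q i - p i" if "i \<in> I" for i
  proof -
    from that have pos: "0 < p i" "0 < q i"
      by (simp_all add: p q)
    then have "p i * ln (q i / p i) \<le> p i * (q i / p i - 1)"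
      by (intro mult_left_mono ln_le_minus_one) simp_all
    with pos show ?thesis
      by (simp add: ln_div right_diff_distrib)
  qed
  then have "(\<Sum>i\<in>I. p i * ln (q i) - p i * ln (p i)) \<le> (\<Sum>i\<in>I. q i - p i)"
    by (rule sum_mono)
  with sum_le show ?thesis
    by (simp add: sum_subtractf)
qed

lemma sum_by_parts_lessThan:
  fixes g l :: "nat \<Rightarrow> 'a::comm_ring"
  assumes "l D = 0"
  shows "(\<Sum>n<D. g n * (l n - l (Suc n))) = (\<Sum>n<D. (g n - (if n = 0 then 0 else g (n - 1))) * l n)"
proof -
  define G where "G n = (if n = 0 then 0 else g (n - 1))" for n
  have "(\<Sum>n<D. g n * l (Suc n)) = (\<Sum>n<Suc D. G n * l n)"
    unfolding sum.lessThan_Suc_shift by (simp add: G_def)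
  also have "\<dots> = (\<Sum>n<D. G n * l n)"
    using assms by simp
  finally show ?thesis
    by (simp add: G_def algebra_simps sum_subtractf)
qed

lemma funpow_add_app: "(f ^^ m) ((f ^^ n) x) = (f ^^ (m + n)) x"
  by (simp add: funpow_add)

locale parent_tree =
  fixes V :: "'v set" and r :: 'v and par :: "'v \<Rightarrow> 'v"
  assumes rooted: "rooted_tree V r par"
begin

lemma finite_nodes: "finite V"
  and par_root: "par r = r"
  and par_in: "v \<in> V \<Longrightarrow> par v \<in> V"
  and reaches_root: "v \<in> V \<Longrightarrow> \<exists>n. (par ^^ n) v = r"
  using rooted by (auto simp: rooted_tree_def)

lemma funpow_in: "x \<in> V \<Longrightarrow> (par ^^ n) x \<in> V"
  by (induction n) (auto simp: par_in)

lemma funpow_root: "(par ^^ n) r = r"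
  by (induction n) (auto simp: par_root)

lemma funpow_depth: "x \<in> V \<Longrightarrow> (par ^^ depth r par x) x = r"
  unfolding depth_def by (rule LeastI_ex) (rule reaches_root)

lemma funpow_ne_root: "n < depth r par x \<Longrightarrow> (par ^^ n) x \<noteq> r"
  unfolding depth_def by (rule not_less_Least)

lemma funpow_eq_root_iff:
  assumes "x \<in> V"
  shows "(par ^^ n) x = r \<longleftrightarrow> depth r par x \<le> n"
proof
  assume "depth r par x \<le> n"
  then have "(par ^^ n) x = (par ^^ (n - depth r par x)) ((par ^^ depth r par x) x)"
    by (simp add: funpow_add_app)
  then show "(par ^^ n) x = r"
    by (simp add: funpow_depth[OF assms] funpow_root)
qed (use funpow_ne_root not_less in blast)

lemma depth_funpow:
  assumes "x \<in> V" "n \<le> depth r par x"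
  shows "depth r par ((par ^^ n) x) = depth r par x - n"
proof -
  have "(par ^^ m) ((par ^^ n) x) = r \<longleftrightarrow> depth r par x - n \<le> m" for m
    using funpow_eq_root_iff[OF assms(1), of "m + n"] assms(2) by (simp add: funpow_add_app le_diff_conv)
  then show ?thesis
    unfolding depth_def[of r par "(par ^^ n) x"] by (intro Least_equality) auto
qed

lemma depth_par:
  assumes "j \<in> V" "j \<noteq> r"
  shows "depth r par j = Suc (depth r par (par j))"
proof -
  have "depth r par j \<noteq> 0"
    using funpow_depth[OF assms(1)] assms(2) by (metis funpow_0)
  with depth_funpow[OF assms(1), of 1] show ?thesis
    by simp
qed

lemma depth_child: "j \<in> children V r par u \<Longrightarrow> depth r par j = Suc (depth r par u)"
  by (auto simp: children_def depth_par)

lemma funpow_min_depth: "x \<in> V \<Longrightarrow> (par ^^ min n (depth r par x)) x = (par ^^ n) x"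
  by (metis funpow_depth funpow_eq_root_iff min_def nle_le)

lemma inj_on_funpow: "x \<in> V \<Longrightarrow> inj_on (\<lambda>n. (par ^^ n) x) {..<depth r par x}"
  by (rule inj_on_inverseI[where g = "\<lambda>v. depth r par x - depth r par v"]) (simp add: depth_funpow)

lemma funpow_in_children:
  assumes "x \<in> V" "n < depth r par x"
  shows "(par ^^ n) x \<in> children V r par ((par ^^ Suc n) x)"
  using assms funpow_in funpow_ne_root by (simp add: children_def)

lemma funpow_eq_if_depth_eq:
  assumes "x \<in> V" "(par ^^ a) x = u" "(par ^^ b) x = v" "u \<noteq> r" "v \<noteq> r"
    and "depth r par u = depth r par v"
  shows "u = v"
proof -
  have "a < depth r par x" "b < depth r par x"
    using assms funpow_eq_root_iff not_less by blast+
  with assms have "a = b"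
    using depth_funpow[OF assms(1)] by (metis diff_diff_cancel less_imp_le)
  with assms show ?thesis
    by simp
qed

lemma sum_nonroot_by_parent: "(\<Sum>j\<in>V - {r}. F j) = (\<Sum>u\<in>V. \<Sum>j\<in>children V r par u. F j)"
proof -
  have "children V r par u = {j \<in> V - {r}. par j = u}" for u
    by (auto simp: children_def)
  moreover have "par ` (V - {r}) \<subseteq> V"
    using par_in by blast
  ultimately show ?thesis
    using sum.group[OF _ finite_nodes, of "V - {r}" par F] finite_nodes by simp
qed

definition hxe_weight :: "real \<Rightarrow> 'v \<Rightarrow> real" where
  "hxe_weight \<alpha> j = exp (- \<alpha> * real (depth r par j)) -
     (if j \<in> tree_leaves V r par then 0 else exp (- \<alpha> * (real (depth r par j) + 1)))"

lemma hxe_weight_pos: "\<alpha> > 0 \<Longrightarrow> hxe_weight \<alpha> j > 0"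
  by (simp add: hxe_weight_def algebra_simps)

end

lemma anc_path_eq_image:
  "anc_path r par leaf y = (\<lambda>n. (par ^^ n) (leaf y)) ` {..<depth r par (leaf y)}"
  by (auto simp: anc_path_def)

locale class_tree = parent_tree V r par for V :: "'v set" and r and par +
  fixes leaf :: "nat \<Rightarrow> 'v" and K :: nat
  assumes leaves_bij: "bij_betw leaf {0..<K} (tree_leaves V r par)"
begin

lemma leaf_in_leaves: "k < K \<Longrightarrow> leaf k \<in> tree_leaves V r par"
  using bij_betw_apply[OF leaves_bij] by simp

lemma leaf_in: "k < K \<Longrightarrow> leaf k \<in> V"
  and children_leaf: "k < K \<Longrightarrow> children V r par (leaf k) = {}"
  using leaf_in_leaves by (auto simp: tree_leaves_def)

lemma node_classes_subset: "node_classes K par leaf v \<subseteq> {0..<K}"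
  by (auto simp: node_classes_def)

lemma finite_node_classes: "finite (node_classes K par leaf v)"
  using node_classes_subset by (rule finite_subset) simp

lemma node_classes_root: "node_classes K par leaf r = {0..<K}"
  using leaf_in reaches_root by (auto simp: node_classes_def)

lemma node_classes_par: "node_classes K par leaf j \<subseteq> node_classes K par leaf (par j)"
  unfolding node_classes_def by (auto intro: exI[of _ "Suc _"])

lemma node_classes_nonempty:
  assumes "v \<in> V"
  shows "node_classes K par leaf v \<noteq> {}"
proof -
  define D where "D = {u \<in> V. \<exists>n. (par ^^ n) u = v}"
  have "v \<in> D"
    using assms by (auto simp: D_def intro: exI[of _ 0])
  moreover have "finite D"
    using finite_nodes by (simp add: D_def)
  ultimately obtain u where u: "u \<in> D" and "depth r par u = Max (depth r par ` D)"
    using Max_in[of "depth r par ` D"] by (metis empty_iff finite_imageI imageE image_is_empty)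
  with \<open>finite D\<close> have deepest: "depth r par u' \<le> depth r par u" if "u' \<in> D" for u'
    using that by simp
  have "children V r par u = {}"
  proof (rule equals0I)
    fix c assume c: "c \<in> children V r par u"
    then have "c \<in> D"
      using u by (auto simp: D_def children_def) (metis funpow_Suc_right comp_apply)
    with deepest depth_child[OF c] show False
      by fastforce
  qed
  then have "u \<in> tree_leaves V r par"
    using u by (simp add: D_def tree_leaves_def)
  then obtain k where "k < K" "leaf k = u"
    using leaves_bij by (metis atLeastLessThan_iff bij_betw_def imageE)
  with u show ?thesis
    by (auto simp: D_def node_classes_def)
qed

lemma sum_anc_path:
  "k < K \<Longrightarrow> (\<Sum>j\<in>anc_path r par leaf k. F j) = (\<Sum>n<depth r par (leaf k). F ((par ^^ n) (leaf k)))"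
  unfolding anc_path_eq_image by (rule sum.reindex_cong[OF inj_on_funpow[OF leaf_in]]) simp_all

lemma mem_anc_path_iff:
  assumes "k < K" "j \<noteq> r"
  shows "j \<in> anc_path r par leaf k \<longleftrightarrow> k \<in> node_classes K par leaf j"
proof
  assume "k \<in> node_classes K par leaf j"
  then obtain n where n: "(par ^^ n) (leaf k) = j"
    by (auto simp: node_classes_def)
  with assms have "n < depth r par (leaf k)"
    using funpow_eq_root_iff[OF leaf_in] not_less by blast
  with n show "j \<in> anc_path r par leaf k"
    by (auto simp: anc_path_def)
qed (use assms in \<open>auto simp: anc_path_def node_classes_def\<close>)

lemma node_classes_children:
  assumes "u \<in> V" "children V r par u \<noteq> {}"
  shows "node_classes K par leaf u = (\<Union>c\<in>children V r par u. node_classes K par leaf c)"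
proof (intro equalityI subsetI)
  fix k assume "k \<in> node_classes K par leaf u"
  then obtain n where k: "k < K" and "(par ^^ n) (leaf k) = u"
    by (auto simp: node_classes_def)
  then have n: "(par ^^ min n (depth r par (leaf k))) (leaf k) = u"
    by (simp add: funpow_min_depth leaf_in)
  moreover have "min n (depth r par (leaf k)) \<noteq> 0"
    using n assms(2) children_leaf[OF k] by (metis funpow_0)
  ultimately obtain m where "m < depth r par (leaf k)" "(par ^^ Suc m) (leaf k) = u"
    by (metis Suc_le_lessD min.cobounded2 not0_implies_Suc)
  then have "(par ^^ m) (leaf k) \<in> children V r par u"
    using funpow_in_children[OF leaf_in[OF k]] by blast
  moreover have "k \<in> node_classes K par leaf ((par ^^ m) (leaf k))"
    using k by (auto simp: node_classes_def)
  ultimately show "k \<in> (\<Union>c\<in>children V r par u. node_classes K par leaf c)"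
    by blast
qed (use node_classes_par in \<open>auto simp: children_def\<close>)

lemma node_classes_children_disjoint:
  assumes "c \<in> children V r par u" "c' \<in> children V r par u" "c \<noteq> c'"
  shows "node_classes K par leaf c \<inter> node_classes K par leaf c' = {}"
proof (rule equals0I)
  fix k assume "k \<in> node_classes K par leaf c \<inter> node_classes K par leaf c'"
  then obtain a b where "k < K" "(par ^^ a) (leaf k) = c" "(par ^^ b) (leaf k) = c'"
    by (auto simp: node_classes_def)
  moreover have "c \<noteq> r" "c' \<noteq> r" "depth r par c = depth r par c'"
    using assms by (auto simp: children_def depth_child)
  ultimately show False
    using funpow_eq_if_depth_eq[OF leaf_in] assms(3) by blast
qed

definition mass :: "(nat \<Rightarrow> real) \<Rightarrow> 'v \<Rightarrow> real" where
  "mass g v = (\<Sum>k\<in>node_classes K par leaf v. g k)"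

definition cond_prob :: "(nat \<Rightarrow> real) \<Rightarrow> 'v \<Rightarrow> real" where
  "cond_prob g v = mass g v / mass g (par v)"

lemma mass_pos:
  assumes "prob_vec_pos K g" "v \<in> V"
  shows "0 < mass g v"
  unfolding mass_def
proof (rule sum_pos[OF finite_node_classes node_classes_nonempty[OF assms(2)]])
  fix k assume "k \<in> node_classes K par leaf v"
  then have "k < K"
    using node_classes_subset by fastforce
  with assms(1) show "0 < g k"
    by (simp add: prob_vec_pos_def)
qed

lemma mass_root: "prob_vec_pos K g \<Longrightarrow> mass g r = 1"
  by (simp add: mass_def node_classes_root prob_vec_pos_def atLeast0LessThan)

lemma cond_prob_pos: "prob_vec_pos K g \<Longrightarrow> v \<in> V \<Longrightarrow> 0 < cond_prob g v"
  by (simp add: cond_prob_def mass_pos par_in)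

lemma sum_mass_children:
  assumes "u \<in> V" "children V r par u \<noteq> {}"
  shows "(\<Sum>c\<in>children V r par u. mass g c) = mass g u"
proof -
  have "finite (children V r par u)"
    using finite_nodes by (simp add: children_def)
  then show ?thesis
    unfolding mass_def node_classes_children[OF assms]
    by (subst sum.UNION_disjoint) (auto simp: finite_node_classes node_classes_children_disjoint)
qed

lemma sum_cond_prob_children:
  assumes "prob_vec_pos K g" "u \<in> V" "children V r par u \<noteq> {}"
  shows "(\<Sum>c\<in>children V r par u. cond_prob g c) = 1"
proof -
  have "(\<Sum>c\<in>children V r par u. cond_prob g c) = (\<Sum>c\<in>children V r par u. mass g c) / mass g u"
    by (simp add: cond_prob_def sum_divide_distrib children_def)
  with assms mass_pos[OF assms(1,2)] show ?thesis
    by (simp add: sum_mass_children)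
qed

lemma L_HXE_cond_prob:
  "L_HXE \<alpha> K r par leaf f y =
     - (\<Sum>j\<in>anc_path r par leaf y. exp (- \<alpha> * real (depth r par j)) * ln (cond_prob f j))"
  by (simp add: L_HXE_def cond_prob_def mass_def)

lemma hxe_weight_funpow_leaf:
  assumes k: "k < K" and n: "n < depth r par (leaf k)"
  shows "hxe_weight \<alpha> ((par ^^ n) (leaf k)) = exp (- \<alpha> * real (depth r par (leaf k) - n))
     - (if n = 0 then 0 else exp (- \<alpha> * real (depth r par (leaf k) - (n - 1))))"
proof -
  have "(par ^^ n) (leaf k) \<in> tree_leaves V r par \<longleftrightarrow> n = 0"
    using funpow_in_children[OF leaf_in[OF k], of "n - 1"] n leaf_in_leaves[OF k]
    by (cases n) (auto simp: tree_leaves_def)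
  moreover have "depth r par ((par ^^ n) (leaf k)) = depth r par (leaf k) - n"
    using depth_funpow[OF leaf_in[OF k]] n by simp
  ultimately show ?thesis
    using n by (simp add: hxe_weight_def of_nat_diff algebra_simps)
qed

lemma sum_hxe_weight_anc_path:
  assumes k: "k < K"
  shows "(\<Sum>j\<in>anc_path r par leaf k. hxe_weight \<alpha> j) =
    (if children V r par r = {} then 0 else exp (- \<alpha>))"
proof -
  define D where "D = depth r par (leaf k)"
  define G where "G n = (if n = 0 then 0 else exp (- \<alpha> * real (D - (n - 1))))" for n
  have "(\<Sum>j\<in>anc_path r par leaf k. hxe_weight \<alpha> j) = (\<Sum>n<D. G (Suc n) - G n)"
    unfolding sum_anc_path[OF k] D_def[symmetric]
    by (rule sum.cong) (simp_all add: hxe_weight_funpow_leaf[OF k] D_def G_def)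
  also have "\<dots> = G D"
    unfolding sum_lessThan_telescope by (simp add: G_def)
  also have "\<dots> = (if children V r par r = {} then 0 else exp (- \<alpha>))"
  proof (cases "D = 0")
    case True
    then have "leaf k = r"
      using funpow_depth[OF leaf_in[OF k]] by (simp add: D_def)
    with True children_leaf[OF k] show ?thesis
      by (simp add: G_def)
  next
    case False
    then have "(par ^^ (D - 1)) (leaf k) \<in> children V r par r"
      using funpow_in_children[OF leaf_in[OF k], of "D - 1"] funpow_depth[OF leaf_in[OF k]]
      by (simp add: D_def)
    with False show ?thesis
      by (auto simp: G_def)
  qed
  finally show ?thesis .
qed

lemma L_HXE_eq_hxe_weight:
  assumes f: "prob_vec_pos K f" and y: "y < K"
  shows "L_HXE \<alpha> K r par leaf f y = - (\<Sum>j\<in>anc_path r par leaf y. hxe_weight \<alpha> j * ln (mass f j))"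
proof -
  define D where "D = depth r par (leaf y)"
  define g where "g n = exp (- \<alpha> * real (D - n))" for n
  define l where "l n = ln (mass f ((par ^^ n) (leaf y)))" for n
  have "l D = 0"
    using funpow_depth[OF leaf_in[OF y]] mass_root[OF f] by (simp add: l_def D_def)
  have "L_HXE \<alpha> K r par leaf f y = - (\<Sum>n<D. g n * (l n - l (Suc n)))"
    unfolding L_HXE_cond_prob sum_anc_path[OF y] D_def[symmetric]
  proof (intro arg_cong[where f = uminus] sum.cong refl)
    fix n assume "n \<in> {..<D}"
    then have "depth r par ((par ^^ n) (leaf y)) = D - n"
      using depth_funpow[OF leaf_in[OF y]] by (simp add: D_def)
    moreover have "ln (cond_prob f ((par ^^ n) (leaf y))) = l n - l (Suc n)"
      using mass_pos[OF f funpow_in[OF leaf_in[OF y]], of n]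
        mass_pos[OF f par_in[OF funpow_in[OF leaf_in[OF y]]], of n]
      by (simp add: cond_prob_def l_def ln_div)
    ultimately show "exp (- \<alpha> * real (depth r par ((par ^^ n) (leaf y)))) *
        ln (cond_prob f ((par ^^ n) (leaf y))) = g n * (l n - l (Suc n))"
      by (simp add: g_def)
  qed
  also have "\<dots> = - (\<Sum>n<D. (g n - (if n = 0 then 0 else g (n - 1))) * l n)"
    using sum_by_parts_lessThan[of l D g] \<open>l D = 0\<close> by simp
  also have "\<dots> = - (\<Sum>j\<in>anc_path r par leaf y. hxe_weight \<alpha> j * ln (mass f j))"
    unfolding sum_anc_path[OF y] D_def[symmetric]
    by (intro arg_cong[where f = uminus] sum.cong refl)
      (simp add: hxe_weight_funpow_leaf[OF y] D_def g_def l_def)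
  finally show ?thesis .
qed

lemma sum_anc_path_swap:
  "(\<Sum>k<K. \<pi> k * (\<Sum>j\<in>anc_path r par leaf k. G j)) = (\<Sum>j\<in>V - {r}. G j * mass \<pi> j)"
proof -
  have anc: "anc_path r par leaf k = {j \<in> V - {r}. k \<in> node_classes K par leaf j}" if "k < K" for k
  proof -
    have "anc_path r par leaf k \<subseteq> V - {r}"
      using funpow_in[OF leaf_in[OF that]] funpow_ne_root by (auto simp: anc_path_def)
    with mem_anc_path_iff[OF that] show ?thesis
      by blast
  qed
  have classes: "{k \<in> {..<K}. k \<in> node_classes K par leaf j} = node_classes K par leaf j" for j
    using node_classes_subset by fastforce
  have "(\<Sum>k<K. \<pi> k * (\<Sum>j\<in>anc_path r par leaf k. G j))
      = (\<Sum>k<K. \<Sum>j\<in>{j \<in> V - {r}. k \<in> node_classes K par leaf j}. \<pi> k * G j)"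
    by (rule sum.cong) (simp_all add: anc sum_distrib_left)
  also have "\<dots> = (\<Sum>j\<in>V - {r}. \<Sum>k\<in>{k \<in> {..<K}. k \<in> node_classes K par leaf j}. \<pi> k * G j)"
    using finite_nodes by (intro sum.swap_restrict) simp_all
  also have "\<dots> = (\<Sum>j\<in>V - {r}. G j * mass \<pi> j)"
    unfolding classes mass_def by (simp add: sum_distrib_left mult.commute)
  finally show ?thesis .
qed

lemma expected_L_HXE:
  "(\<Sum>k<K. \<pi> k * L_HXE \<alpha> K r par leaf f k) =
     - (\<Sum>u\<in>V. exp (- \<alpha> * (real (depth r par u) + 1)) *
          (\<Sum>j\<in>children V r par u. mass \<pi> j * ln (cond_prob f j)))"
proof -
  have "(\<Sum>k<K. \<pi> k * L_HXE \<alpha> K r par leaf f k) =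
      - (\<Sum>j\<in>V - {r}. exp (- \<alpha> * real (depth r par j)) * ln (cond_prob f j) * mass \<pi> j)"
    unfolding L_HXE_cond_prob sum_anc_path_swap[symmetric] by (simp add: sum_negf)
  also have "\<dots> = - (\<Sum>u\<in>V. \<Sum>j\<in>children V r par u.
      exp (- \<alpha> * real (depth r par j)) * ln (cond_prob f j) * mass \<pi> j)"
    by (simp add: sum_nonroot_by_parent)
  also have "\<dots> = - (\<Sum>u\<in>V. exp (- \<alpha> * (real (depth r par u) + 1)) *
          (\<Sum>j\<in>children V r par u. mass \<pi> j * ln (cond_prob f j)))"
    by (simp add: sum_distrib_left depth_child algebra_simps)
  finally show ?thesis .
qed

lemma children_cross_entropy_le:
  assumes \<pi>: "prob_vec_pos K \<pi>" and f: "prob_vec_pos K f" and u: "u \<in> V"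
  shows "(\<Sum>j\<in>children V r par u. mass \<pi> j * ln (cond_prob f j))
       \<le> (\<Sum>j\<in>children V r par u. mass \<pi> j * ln (cond_prob \<pi> j))"
proof (cases "children V r par u = {}")
  case False
  have ch: "j \<in> V" "par j = u" if "j \<in> children V r par u" for j
    using that by (auto simp: children_def)
  have "(\<Sum>j\<in>children V r par u. cond_prob \<pi> j * ln (cond_prob f j))
      \<le> (\<Sum>j\<in>children V r par u. cond_prob \<pi> j * ln (cond_prob \<pi> j))"
    using ch cond_prob_pos[OF \<pi>] cond_prob_pos[OF f]
      sum_cond_prob_children[OF \<pi> u False] sum_cond_prob_children[OF f u False]
    by (intro gibbs_inequality) auto
  then have "mass \<pi> u * (\<Sum>j\<in>children V r par u. cond_prob \<pi> j * ln (cond_prob f j))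
      \<le> mass \<pi> u * (\<Sum>j\<in>children V r par u. cond_prob \<pi> j * ln (cond_prob \<pi> j))"
    using mass_pos[OF \<pi> u] by (simp add: mult_left_mono)
  moreover have "mass \<pi> u * cond_prob \<pi> j = mass \<pi> j" if "j \<in> children V r par u" for j
    using ch[OF that] mass_pos[OF \<pi> u] by (simp add: cond_prob_def)
  ultimately show ?thesis
    by (simp add: sum_distrib_left mult.assoc[symmetric] cong: sum.cong)
qed simp

lemma proper_L_HXE: "proper K (L_HXE \<alpha> K r par leaf)"
  unfolding proper_def expected_L_HXE neg_le_iff_le
  by (intro allI impI sum_mono mult_left_mono children_cross_entropy_le) simp_all

end

theorem proposition4:
  fixes V :: "'v set" and r :: 'v and par :: "'v \<Rightarrow> 'v"
    and leaf :: "nat \<Rightarrow> 'v" and K :: nat and \<alpha> :: real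
  assumes tree: "rooted_tree V r par"
    and leaves: "bij_betw leaf {0..<K} (tree_leaves V r par)"
    and alpha: "\<alpha> > 0"
  shows "(\<exists>w :: 'v \<Rightarrow> real.
            (\<forall>j\<in>V - {r}. w j > 0)
          \<and> (\<exists>c. \<forall>k<K. (\<Sum>j\<in>anc_path r par leaf k. w j) = c)
          \<and> (\<forall>f y. prob_vec_pos K f \<longrightarrow> y < K \<longrightarrow>
               L_HXE \<alpha> K r par leaf f y =
                 - (\<Sum>j\<in>anc_path r par leaf y. w j * ln (\<Sum>k\<in>node_classes K par leaf j. f k))))
       \<and> proper K (L_HXE \<alpha> K r par leaf)"
proof -
  interpret class_tree V r par leaf K
    using tree leaves by unfold_locales
  have "\<forall>j\<in>V - {r}. hxe_weight \<alpha> j > 0"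
    using hxe_weight_pos[OF alpha] by blast
  moreover have "\<exists>c. \<forall>k<K. (\<Sum>j\<in>anc_path r par leaf k. hxe_weight \<alpha> j) = c"
    using sum_hxe_weight_anc_path by blast
  moreover have "\<forall>f y. prob_vec_pos K f \<longrightarrow> y < K \<longrightarrow>
      L_HXE \<alpha> K r par leaf f y =
        - (\<Sum>j\<in>anc_path r par leaf y. hxe_weight \<alpha> j * ln (\<Sum>k\<in>node_classes K par leaf j. f k))"
    using L_HXE_eq_hxe_weight by (simp add: mass_def)
  ultimately show ?thesis
    using proper_L_HXE by blast
qed

end
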